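(* Let $G$ be a finite connected weighted graph with $N$ vertices, let $0=\lambda_0<\lambda_1\le\cdots\le\lambda_{N-1}$ be the eigenvalues (with multiplicity) of its weighted Laplacian $L_w$ on $\ell^2(G)$, and let $\mathcal{S}=(S_m)_{m=0,\ldots,n}$ be a partition of $V(G)$ with $K_m(\mathcal{S})>0$ for all $m=0,\ldots,n-1$. Then \[ \mathcal{N}\left[0,\ (2\delta_{\mathcal{S},2}^2)^{-1}\right)\le|S_0| \quad\text{and}\quad \mathcal{N}\left[(2\delta_{\mathcal{S},2}^2)^{-1},\ \lambda_{N-1}\right]\ge N-|S_0|. \]
   Context: $G$ has vertex set $V(G)$ and symmetric weights $w:V(G)\times V(G)\to[0,\infty)$ with $w(u,u)=0$; connected means the graph with edges $\{(u,v):w(u,v)>0\}$ is connected. Vertex weight $\nu\equiv1$. $(L_wf)(v)=\sum_{u}(f(v)-f(u))w(v,u)$. For an interval $I$, $\mathcal{N}I$ is the number of eigenvalues of $L_w$ in $I$ counted with multiplicity. $w_A(v)=\sum_{u\in A}w(u,v)$; $D_m=\sup_{v\in S_m}w_{S_{m+1}}(v)$, $K_m=\inf_{v\in S_{m+1}}w_{S_m}(v)$, and $\delta_{\mathcal{S},2}=\left(\sum_{m=1}^n\sum_{k=1}^m\frac{1}{K_{k-1}}\prod_{i=k}^{m-1}\frac{D_i}{K_i}\right)^{1/2}$ (empty products $=1$, empty sums $=0$, and $(2\delta_{\mathcal{S},2}^2)^{-1}=+\infty$ if $\delta_{\mathcal{S},2}=0$). *)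

theory Defs
  imports "Jordan_Normal_Form.Char_Poly" "HOL-Library.Extended_Real"
begin

definition weighted_graph :: "nat \<Rightarrow> (nat \<Rightarrow> nat \<Rightarrow> real) \<Rightarrow> bool" where
  "weighted_graph N w \<longleftrightarrow>
     (\<forall>u<N. \<forall>v<N. w u v \<ge> 0 \<and> w u v = w v u) \<and> (\<forall>u<N. w u u = 0)"

definition connected_wg :: "nat \<Rightarrow> (nat \<Rightarrow> nat \<Rightarrow> real) \<Rightarrow> bool" where
  "connected_wg N w \<longleftrightarrow>
     (\<forall>u<N. \<forall>v<N. (\<lambda>a b. a < N \<and> b < N \<and> w a b > 0)\<^sup>*\<^sup>* u v)"

text \<open>Weighted Laplacian (vertex weight 1): (L f)(v) = sum_u (f v - f u) w(v,u).\<close>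
definition laplacian :: "nat \<Rightarrow> (nat \<Rightarrow> nat \<Rightarrow> real) \<Rightarrow> real mat" where
  "laplacian N w = mat N N (\<lambda>(i,j). if i = j then (\<Sum>u<N. w i u) else - w i j)"

definition eig_count :: "real mat \<Rightarrow> (real \<Rightarrow> bool) \<Rightarrow> nat" where
  "eig_count A P = (\<Sum>x\<in>{x. poly (char_poly A) x = 0 \<and> P x}. order x (char_poly A))"

definition max_eig :: "real mat \<Rightarrow> real" where
  "max_eig A = Max {x. poly (char_poly A) x = 0}"

definition wA :: "(nat \<Rightarrow> nat \<Rightarrow> real) \<Rightarrow> nat set \<Rightarrow> nat \<Rightarrow> real" where
  "wA w A v = (\<Sum>u\<in>A. w u v)"

definition D_S :: "(nat \<Rightarrow> nat \<Rightarrow> real) \<Rightarrow> (nat \<Rightarrow> nat set) \<Rightarrow> nat \<Rightarrow> real" where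
  "D_S w S m = Sup ((\<lambda>v. wA w (S (Suc m)) v) ` S m)"

definition K_S :: "(nat \<Rightarrow> nat \<Rightarrow> real) \<Rightarrow> (nat \<Rightarrow> nat set) \<Rightarrow> nat \<Rightarrow> real" where
  "K_S w S m = Inf ((\<lambda>v. wA w (S m) v) ` S (Suc m))"

definition delta2 :: "(nat \<Rightarrow> nat \<Rightarrow> real) \<Rightarrow> (nat \<Rightarrow> nat set) \<Rightarrow> nat \<Rightarrow> real" where
  "delta2 w S n = sqrt (\<Sum>m=1..n. \<Sum>k=1..m.
      (1 / K_S w S (k - 1)) * (\<Prod>i=k..<m. D_S w S i / K_S w S i))"

definition threshold :: "(nat \<Rightarrow> nat \<Rightarrow> real) \<Rightarrow> (nat \<Rightarrow> nat set) \<Rightarrow> nat \<Rightarrow> ereal" where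
  "threshold w S n = (if delta2 w S n = 0 then \<infinity> else ereal (1 / (2 * (delta2 w S n)\<^sup>2)))"

definition is_partition :: "nat \<Rightarrow> (nat \<Rightarrow> nat set) \<Rightarrow> nat \<Rightarrow> bool" where
  "is_partition N S n \<longleftrightarrow>
     (\<Union>m\<le>n. S m) = {..<N} \<and> (\<forall>m\<le>n. S m \<noteq> {}) \<and>
     (\<forall>i\<le>n. \<forall>j\<le>n. i \<noteq> j \<longrightarrow> S i \<inter> S j = {})"

end

theory Submission
  imports Defs
begin

text \<open>
  For \<open>f\<close> vanishing on \<open>S\<^sub>0\<close>, every vertex of \<open>S\<^sub>m\<^sub>+\<^sub>1\<close> receives weight at least \<open>K\<^sub>m\<close>
  from \<open>S\<^sub>m\<close> and every vertex of \<open>S\<^sub>m\<close> sends at most \<open>D\<^sub>m\<close> to \<open>S\<^sub>m\<^sub>+\<^sub>1\<close>; comparing \<open>f\<close> across the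
  edges between consecutive layers bounds the mass of \<open>f\<close> on \<open>S\<^sub>m\<close> by \<open>s\<^sub>m\<close> times the energy
  of the earlier layers, where \<open>s\<^sub>m\<^sub>+\<^sub>1 = 1/K\<^sub>m + (D\<^sub>m/K\<^sub>m) s\<^sub>m\<close>. Summing over the layers gives the
  Hardy inequality \<open>\<parallel>f\<parallel>\<^sup>2 \<le> 2 \<delta>\<^sup>2 \<langle>f, L f\<rangle>\<close>, since \<open>\<delta>\<^sup>2 = s\<^sub>1 + \<dots> + s\<^sub>n\<close>.
  If more than \<open>|S\<^sub>0|\<close> eigenvalues were below \<open>(2\<delta>\<^sup>2)\<^sup>-\<^sup>1\<close>, some nonzero combination of their
  (orthonormal) eigenvectors would vanish on \<open>S\<^sub>0\<close>, and its Rayleigh quotient would contradict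
  the Hardy inequality. The second estimate counts the complementary eigenvalues.
\<close>

section \<open>Orthogonal diagonalization of real symmetric matrices\<close>

lemma real_symmetric_complex_eigenvalue_real:
  fixes A :: "real mat"
  assumes A: "A \<in> carrier_mat n n" and sym: "transpose_mat A = A"
    and z: "z \<in> carrier_vec n" and z0: "z \<noteq> 0\<^sub>v n"
    and Az: "map_mat complex_of_real A *\<^sub>v z = k \<cdot>\<^sub>v z"
  shows "cnj k = k"
proof -
  define s where "s = (\<Sum>i<n. \<Sum>j<n. cnj (z $ i) * complex_of_real (A $$ (i,j)) * z $ j)"
  define t where "t = (\<Sum>i<n. cnj (z $ i) * z $ i)"
  have "s = (\<Sum>i<n. cnj (z $ i) * (map_mat complex_of_real A *\<^sub>v z) $ i)"
    unfolding s_def using A z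
    by (auto simp: scalar_prod_def sum_distrib_left atLeast0LessThan intro!: sum.cong)
  also have "\<dots> = k * t" unfolding Az t_def using z
    by (simp add: sum_distrib_left algebra_simps)
  finally have s_eq: "s = k * t" .
  have "cnj s = (\<Sum>i<n. \<Sum>j<n. z $ i * complex_of_real (A $$ (i,j)) * cnj (z $ j))"
    unfolding s_def by simp
  also have "\<dots> = (\<Sum>j<n. \<Sum>i<n. z $ i * complex_of_real (A $$ (i,j)) * cnj (z $ j))"
    by (rule sum.swap)
  also have "\<dots> = s" unfolding s_def
  proof (intro sum.cong refl)
    fix i j assume "i \<in> {..<n}" "j \<in> {..<n}"
    hence "A $$ (j,i) = A $$ (i,j)" using arg_cong[OF sym, of "\<lambda>M. M $$ (i,j)"] A by auto
    thus "z $ j * complex_of_real (A $$ (j, i)) * cnj (z $ i)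
        = cnj (z $ i) * complex_of_real (A $$ (i, j)) * z $ j" by simp
  qed
  finally have s_real: "cnj s = s" .
  have t_eq: "t = complex_of_real (\<Sum>i<n. (cmod (z $ i))\<^sup>2)"
    unfolding t_def of_real_sum complex_norm_square by (simp add: mult.commute)
  have "(\<Sum>i<n. (cmod (z $ i))\<^sup>2) \<noteq> 0"
  proof
    assume "(\<Sum>i<n. (cmod (z $ i))\<^sup>2) = 0"
    hence "\<forall>i\<in>{..<n}. (cmod (z $ i))\<^sup>2 = 0" by (subst (asm) sum_nonneg_eq_0_iff) auto
    hence "z = 0\<^sub>v n" using z by (intro eq_vecI) auto
    with z0 show False ..
  qed
  hence "t \<noteq> 0" unfolding t_eq of_real_eq_0_iff .
  moreover have "cnj t = t" unfolding t_eq by (simp only: complex_cnj_complex_of_real)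
  ultimately show ?thesis using s_eq s_real by (metis complex_cnj_divide nonzero_mult_div_cancel_right)
qed

lemma real_symmetric_has_eigenvector:
  fixes A :: "real mat"
  assumes A: "A \<in> carrier_mat n n" and sym: "transpose_mat A = A" and n: "n > 0"
  shows "\<exists>e v. v \<in> carrier_vec n \<and> v \<noteq> 0\<^sub>v n \<and> A *\<^sub>v v = e \<cdot>\<^sub>v v"
proof -
  let ?Ac = "map_mat complex_of_real A"
  have Ac: "?Ac \<in> carrier_mat n n" using A by simp
  obtain as where cp: "char_poly ?Ac = (\<Prod>a\<leftarrow>as. [:- a, 1:])" and len: "length as = n"
    using char_poly_factorized[OF Ac] by blast
  define k where "k = hd as"
  have "k \<in> set as" using len n unfolding k_def by (cases as) auto
  hence root: "poly (char_poly ?Ac) k = 0" unfolding cp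
    by (simp add: poly_prod_list prod_list_zero_iff)
  then obtain z where "eigenvector ?Ac z k"
    using eigenvalue_root_char_poly[OF Ac] unfolding eigenvalue_def by blast
  hence "cnj k = k" using Ac
    by (intro real_symmetric_complex_eigenvalue_real[OF A sym]) (auto simp: eigenvector_def)
  then obtain r where k: "k = complex_of_real r" by (metis Reals_cnj_iff Reals_cases)
  have "char_poly ?Ac = map_poly complex_of_real (char_poly A)"
    by (rule of_real_hom.char_poly_hom[OF A])
  with root have "poly (char_poly A) r = 0" unfolding k by simp
  then obtain v where "eigenvector A v r"
    using eigenvalue_root_char_poly[OF A] unfolding eigenvalue_def by blast
  thus ?thesis unfolding eigenvector_def using A by auto
qed

lemma householder_reflection:
  fixes v :: "real vec"
  assumes v: "v \<in> carrier_vec n" and vv: "v \<bullet> v = 1" and n: "n > 0"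
  shows "\<exists>H. H \<in> carrier_mat n n \<and> transpose_mat H = H \<and> H * H = 1\<^sub>m n \<and> col H 0 = v"
proof -
  define u where "u = (\<lambda>i. (if i = 0 then 1 else 0) - v $ i :: real)"
  define \<sigma> where "\<sigma> = (\<Sum>k<n. (u k)\<^sup>2)"
  define c where "c = 2 / \<sigma>"
  define H where "H = mat n n (\<lambda>(i,j). (if i = j then 1 else 0) - c * u i * u j)"
  have H: "H \<in> carrier_mat n n" unfolding H_def by simp
  have cc\<sigma>: "c * c * \<sigma> = 2 * c" unfolding c_def by (cases "\<sigma> = 0") auto
  have vsum: "(\<Sum>k<n. (v $ k)\<^sup>2) = 1" using vv v
    by (simp add: scalar_prod_def power2_eq_square atLeast0LessThan)
  have "\<sigma> = (\<Sum>k<n. (if k = 0 then 1 - 2 * v $ k else 0) + (v $ k)\<^sup>2)"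
    unfolding \<sigma>_def u_def by (rule sum.cong) (auto simp: power2_eq_square algebra_simps)
  hence \<sigma>: "\<sigma> = 2 * (1 - v $ 0)" using n by (simp add: sum.distrib vsum)
  have "H * H = 1\<^sub>m n"
  proof (rule eq_matI)
    fix i j assume "i < dim_row (1\<^sub>m n :: real mat)" and "j < dim_col (1\<^sub>m n :: real mat)"
    hence i: "i < n" and j: "j < n" by auto
    have "(H * H) $$ (i,j) = (\<Sum>k<n. ((if i = k then 1 else 0) - c * u i * u k)
                                  * ((if k = j then 1 else 0) - c * u k * u j))"
      using i j H by (simp add: scalar_prod_def H_def atLeast0LessThan)
    also have "\<dots> = (\<Sum>k<n. (if i = k then (if k = j then 1 else 0) else 0)
        - (if k = i then c * u i * u j else 0) - (if k = j then c * u i * u j else 0)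
        + (c * c * u i * u j) * (u k)\<^sup>2)"
      by (rule sum.cong) (auto simp: algebra_simps power2_eq_square)
    also have "\<dots> = (if i = j then 1 else 0) - 2 * c * u i * u j + (c * c * \<sigma>) * (u i * u j)"
      using i j unfolding \<sigma>_def by (simp add: sum.distrib sum_subtractf sum_distrib_left ac_simps)
    also have "\<dots> = 1\<^sub>m n $$ (i,j)" unfolding cc\<sigma> using i j by simp
    finally show "(H * H) $$ (i,j) = 1\<^sub>m n $$ (i,j)" .
  qed (use H in auto)
  moreover have "transpose_mat H = H" unfolding H_def by (rule eq_matI) auto
  moreover have "col H 0 = v"
  proof (rule eq_vecI)
    fix i assume "i < dim_vec v"
    hence i: "i < n" using v by auto
    show "col H 0 $ i = v $ i"
    proof (cases "\<sigma> = 0")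
      case True
      hence "\<forall>k\<in>{..<n}. (u k)\<^sup>2 = 0" unfolding \<sigma>_def by (subst (asm) sum_nonneg_eq_0_iff) auto
      hence "u i = 0" using i by auto
      thus ?thesis using i n H True unfolding H_def u_def c_def by auto
    next
      case False
      hence "c * u 0 = 1" unfolding c_def \<sigma> u_def by (simp add: field_simps)
      hence "c * u i * u 0 = u i" by (metis mult.commute mult.left_neutral mult.assoc)
      moreover have "col H 0 $ i = (if i = 0 then 1 else 0) - c * u i * u 0"
        using i n H unfolding H_def by simp
      ultimately have "col H 0 $ i = (if i = 0 then 1 else 0) - u i" by simp
      thus ?thesis by (simp add: u_def)
    qed
  qed (use v n H in auto)
  ultimately show ?thesis using H by blast
qed

lemma symmetric_deflation:
  fixes A :: "real mat"
  assumes A: "A \<in> carrier_mat (Suc m) (Suc m)" and sym: "transpose_mat A = A"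
    and v: "v \<in> carrier_vec (Suc m)" and vv: "v \<bullet> v = 1" and Av: "A *\<^sub>v v = e \<cdot>\<^sub>v v"
  shows "\<exists>H B. H \<in> carrier_mat (Suc m) (Suc m) \<and> transpose_mat H = H \<and> H * H = 1\<^sub>m (Suc m)
    \<and> B \<in> carrier_mat m m \<and> transpose_mat B = B
    \<and> H * A * H = four_block_mat (mat 1 1 (\<lambda>_. e)) (0\<^sub>m 1 m) (0\<^sub>m m 1) B"
proof -
  define n where "n = Suc m"
  obtain H where H: "H \<in> carrier_mat n n" and HT: "transpose_mat H = H" and HH: "H * H = 1\<^sub>m n"
    and colH: "col H 0 = v"
    using householder_reflection[OF v[folded n_def] vv] n_def by auto
  define A' where "A' = H * A * H"
  have A': "A' \<in> carrier_mat n n" unfolding A'_def using H A n_def by simp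
  have A'_sym: "transpose_mat A' = A'"
  proof -
    have "transpose_mat A' = transpose_mat H * transpose_mat (H * A)"
      unfolding A'_def using H A n_def by (intro transpose_mult[of _ n n]) auto
    also have "transpose_mat (H * A) = transpose_mat A * transpose_mat H"
      using H A n_def by (intro transpose_mult[of _ n n]) auto
    finally show ?thesis unfolding sym HT A'_def using H A n_def by simp
  qed
  have "col (H * H) 0 = H *\<^sub>v col H 0" using H n_def by (intro col_mult2[of H n n H n 0]) auto
  hence Hv: "H *\<^sub>v v = unit_vec n 0" unfolding HH colH using n_def by simp
  have "col A' 0 = (H * A) *\<^sub>v v"
    unfolding A'_def colH[symmetric] using H A n_def by (subst col_mult2[of _ n n]) auto
  also have "\<dots> = H *\<^sub>v (A *\<^sub>v v)" using H A v n_def by simp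
  also have "\<dots> = e \<cdot>\<^sub>v unit_vec n 0" unfolding Av mult_mat_vec[OF H v[folded n_def]] Hv ..
  finally have colA': "col A' 0 = e \<cdot>\<^sub>v unit_vec n 0" .
  have A'_col0: "A' $$ (i, 0) = (if i = 0 then e else 0)" if "i < n" for i
    using arg_cong[OF colA', of "\<lambda>x. x $ i"] that A' n_def by auto
  have A'_row0: "A' $$ (0, j) = (if j = 0 then e else 0)" if "j < n" for j
    using A'_col0[OF that] arg_cong[OF A'_sym, of "\<lambda>M. M $$ (0, j)"] that A' n_def by auto
  define B where "B = mat m m (\<lambda>(i,j). A' $$ (Suc i, Suc j))"
  have A'_swap: "A' $$ (j, i) = A' $$ (i, j)" if "i < n" "j < n" for i j
    using arg_cong[OF A'_sym, of "\<lambda>M. M $$ (i, j)"] that A' by auto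
  have "transpose_mat B = B" unfolding B_def using A'_swap n_def by (intro eq_matI) auto
  moreover have "A' = four_block_mat (mat 1 1 (\<lambda>_. e)) (0\<^sub>m 1 m) (0\<^sub>m m 1) B"
  proof (rule eq_matI)
    fix i j assume "i < dim_row (four_block_mat (mat 1 1 (\<lambda>_. e)) (0\<^sub>m 1 m) (0\<^sub>m m 1) B)"
      and "j < dim_col (four_block_mat (mat 1 1 (\<lambda>_. e)) (0\<^sub>m 1 m) (0\<^sub>m m 1) B)"
    hence "i < n" "j < n" unfolding B_def n_def by auto
    thus "A' $$ (i, j) = four_block_mat (mat 1 1 (\<lambda>_. e)) (0\<^sub>m 1 m) (0\<^sub>m m 1) B $$ (i, j)"
      using A'_row0 A'_col0 unfolding B_def n_def by (cases i; cases j) auto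
  qed (use A' n_def B_def in auto)
  moreover have "B \<in> carrier_mat m m" unfolding B_def by simp
  ultimately show ?thesis using H HT HH unfolding A'_def n_def by blast
qed

definition diag_mat_of :: "'a::zero list \<Rightarrow> 'a mat" where
  "diag_mat_of es = mat (length es) (length es) (\<lambda>(i,j). if i = j then es ! i else 0)"

lemma diag_mat_of_carrier [simp]: "diag_mat_of es \<in> carrier_mat (length es) (length es)"
  unfolding diag_mat_of_def by simp

lemma diag_mat_of_Cons:
  "four_block_mat (mat 1 1 (\<lambda>_. e)) (0\<^sub>m 1 (length es)) (0\<^sub>m (length es) 1) (diag_mat_of es)
    = diag_mat_of (e # es)"
  by (rule eq_matI) (auto simp: diag_mat_of_def nth_Cons split: nat.split)

definition orthogonal_diagonalization :: "real mat \<Rightarrow> real mat \<Rightarrow> real list \<Rightarrow> bool" where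
  "orthogonal_diagonalization A U es \<longleftrightarrow>
     A \<in> carrier_mat (length es) (length es) \<and> U \<in> carrier_mat (length es) (length es) \<and>
     transpose_mat U * U = 1\<^sub>m (length es) \<and> transpose_mat U * A * U = diag_mat_of es"

theorem real_symmetric_orthogonal_diagonalization:
  fixes A :: "real mat"
  assumes "A \<in> carrier_mat n n" and "transpose_mat A = A"
  shows "\<exists>U es. length es = n \<and> orthogonal_diagonalization A U es"
  using assms
proof (induction n arbitrary: A)
  case 0
  thus ?case by (intro exI[of _ "1\<^sub>m 0"] exI[of _ "[]"])
    (auto simp: orthogonal_diagonalization_def diag_mat_of_def)
next
  case (Suc m A)
  obtain e v where v: "v \<in> carrier_vec (Suc m)" and v0: "v \<noteq> 0\<^sub>v (Suc m)"
    and Av: "A *\<^sub>v v = e \<cdot>\<^sub>v v"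
    using real_symmetric_has_eigenvector[OF Suc.prems] by auto
  define v' where "v' = (1 / sqrt (v \<bullet> v)) \<cdot>\<^sub>v v"
  have "v \<bullet> v > 0"
    using conjugate_square_greater_0_vec[OF v] v0 by simp
  hence v'v': "v' \<bullet> v' = 1" unfolding v'_def using v
    by (simp add: smult_scalar_prod_distrib scalar_prod_smult_distrib power2_eq_square[symmetric])
  have Av': "A *\<^sub>v v' = e \<cdot>\<^sub>v v'"
    unfolding v'_def using mult_mat_vec[OF Suc.prems(1) v] Av v by (auto simp: smult_smult_assoc)
  obtain H B where H: "H \<in> carrier_mat (Suc m) (Suc m)" and HT: "transpose_mat H = H"
    and HH: "H * H = 1\<^sub>m (Suc m)" and B: "B \<in> carrier_mat m m" and BT: "transpose_mat B = B"
    and HAH: "H * A * H = four_block_mat (mat 1 1 (\<lambda>_. e)) (0\<^sub>m 1 m) (0\<^sub>m m 1) B"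
    using symmetric_deflation[OF Suc.prems _ v'v' Av'] v'_def v by auto
  obtain V es where les: "length es = m" and V: "orthogonal_diagonalization B V es"
    using Suc.IH[OF B BT] by blast
  hence V_carrier: "V \<in> carrier_mat m m" and VV: "transpose_mat V * V = 1\<^sub>m m"
    and VBV: "transpose_mat V * B * V = diag_mat_of es"
    unfolding orthogonal_diagonalization_def by auto
  define W where "W = four_block_mat (1\<^sub>m 1) (0\<^sub>m 1 m) (0\<^sub>m m 1) V"
  define W' where "W' = four_block_mat (1\<^sub>m 1) (0\<^sub>m 1 m) (0\<^sub>m m 1) (transpose_mat V)"
  have W: "W \<in> carrier_mat (Suc m) (Suc m)" and W': "W' \<in> carrier_mat (Suc m) (Suc m)"
    unfolding W_def W'_def using V_carrier by auto
  have WT: "transpose_mat W = W'" unfolding W_def W'_def using V_carrier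
    by (subst transpose_four_block_mat) auto
  define U where "U = H * W"
  have U: "U \<in> carrier_mat (Suc m) (Suc m)" unfolding U_def using H W by simp
  have UT: "transpose_mat U = W' * H"
    unfolding U_def using H W HT WT by (simp add: transpose_mult[of _ "Suc m" "Suc m"])
  have "transpose_mat U * U = W' * (H * H) * W"
    unfolding UT unfolding U_def using H W W' by (simp add: assoc_mult_mat[of _ "Suc m" "Suc m" _ "Suc m" _ "Suc m"])
  also have "\<dots> = W' * W" unfolding HH using W W' by simp
  also have "\<dots> = four_block_mat (1\<^sub>m 1) (0\<^sub>m 1 m) (0\<^sub>m m 1) (transpose_mat V * V)"
    unfolding W_def W'_def using V_carrier by (subst mult_four_block_mat[of _ 1 1 _ m _ m]) auto
  finally have UU: "transpose_mat U * U = 1\<^sub>m (Suc m)" unfolding VV by simp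
  have "transpose_mat U * A * U = W' * (H * A * H) * W"
    unfolding UT unfolding U_def using H W W' Suc.prems(1)
    by (simp add: assoc_mult_mat[of _ "Suc m" "Suc m" _ "Suc m" _ "Suc m"])
  also have "\<dots> = four_block_mat (mat 1 1 (\<lambda>_. e)) (0\<^sub>m 1 m) (0\<^sub>m m 1) (transpose_mat V * B) * W"
    unfolding HAH W'_def using V_carrier B by (subst mult_four_block_mat[of _ 1 1 _ m _ m]) auto
  also have "\<dots> = four_block_mat (mat 1 1 (\<lambda>_. e)) (0\<^sub>m 1 m) (0\<^sub>m m 1) (transpose_mat V * B * V)"
    unfolding W_def using V_carrier B by (subst mult_four_block_mat[of _ 1 1 _ m _ m]) auto
  finally have "transpose_mat U * A * U = diag_mat_of (e # es)"
    unfolding VBV les[symmetric] diag_mat_of_Cons .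
  thus ?case using U UU Suc.prems(1) les unfolding orthogonal_diagonalization_def
    by (intro exI[of _ U] exI[of _ "e # es"]) auto
qed

lemma orthogonal_diagonalization_char_poly:
  assumes "orthogonal_diagonalization A U es"
  shows "char_poly A = (\<Prod>a\<leftarrow>es. [:- a, 1:])"
proof -
  define n where "n = length es"
  have A: "A \<in> carrier_mat n n" and U: "U \<in> carrier_mat n n" and UU: "transpose_mat U * U = 1\<^sub>m n"
    and D: "transpose_mat U * A * U = diag_mat_of es"
    using assms unfolding orthogonal_diagonalization_def n_def by auto
  have UT: "transpose_mat U \<in> carrier_mat n n" using U by simp
  have UU': "U * transpose_mat U = 1\<^sub>m n" by (rule mat_mult_left_right_inverse[OF UT U UU])
  have "U * diag_mat_of es * transpose_mat U = (U * transpose_mat U) * A * (U * transpose_mat U)"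
    unfolding D[symmetric] using U A by (simp add: assoc_mult_mat[of _ n n _ n _ n])
  hence A_eq: "A = U * diag_mat_of es * transpose_mat U" unfolding UU' using A by simp
  have "similar_mat A (diag_mat_of es)"
    by (rule similar_matI[OF _ UU' UU A_eq]) (use A U diag_mat_of_carrier[of es] in \<open>auto simp: n_def\<close>)
  hence "char_poly A = char_poly (diag_mat_of es)" by (rule char_poly_similar)
  also have "\<dots> = (\<Prod>a\<leftarrow>diag_mat (diag_mat_of es). [:- a, 1:])"
    by (rule char_poly_upper_triangular[OF diag_mat_of_carrier])
      (auto simp: upper_triangular_def diag_mat_of_def)
  also have "diag_mat (diag_mat_of es) = es"
    by (rule nth_equalityI) (auto simp: diag_mat_def diag_mat_of_def)
  finally show ?thesis .
qed

lemma orthogonal_diagonalization_quadratic_form: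
  assumes "orthogonal_diagonalization A U es" and g: "g \<in> carrier_vec (length es)"
  shows "(U *\<^sub>v g) \<bullet> (A *\<^sub>v (U *\<^sub>v g)) = (\<Sum>i<length es. es ! i * (g $ i)\<^sup>2)"
    and "(U *\<^sub>v g) \<bullet> (U *\<^sub>v g) = (\<Sum>i<length es. (g $ i)\<^sup>2)"
proof -
  define n where "n = length es"
  have A: "A \<in> carrier_mat n n" and U: "U \<in> carrier_mat n n" and UU: "transpose_mat U * U = 1\<^sub>m n"
    and D: "transpose_mat U * A * U = diag_mat_of es" and g: "g \<in> carrier_vec n"
    using assms unfolding orthogonal_diagonalization_def n_def by auto
  have UT: "transpose_mat U \<in> carrier_mat n n" using U by simp
  have change_of_basis: "(U *\<^sub>v g) \<bullet> (M *\<^sub>v (U *\<^sub>v g)) = g \<bullet> ((transpose_mat U * M * U) *\<^sub>v g)"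
    if M: "M \<in> carrier_mat n n" for M
  proof -
    have "(U *\<^sub>v g) \<bullet> (M *\<^sub>v (U *\<^sub>v g)) = (M *\<^sub>v (U *\<^sub>v g)) \<bullet> (U *\<^sub>v g)"
      using M U g by (intro comm_scalar_prod[of _ n]) auto
    also have "\<dots> = (transpose_mat U *\<^sub>v (M *\<^sub>v (U *\<^sub>v g))) \<bullet> g"
      using M U g by (intro transpose_vec_mult_scalar[symmetric, of _ n n]) auto
    also have "\<dots> = ((transpose_mat U * M * U) *\<^sub>v g) \<bullet> g"
      using M U UT g by (simp add: assoc_mult_mat_vec[of _ n n _ n])
    also have "\<dots> = g \<bullet> ((transpose_mat U * M * U) *\<^sub>v g)"
      using UT M U g by (intro comm_scalar_prod[OF mult_mat_vec_carrier g]) auto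
    finally show ?thesis .
  qed
  have "diag_mat_of es *\<^sub>v g = vec n (\<lambda>i. es ! i * g $ i)"
  proof (rule eq_vecI)
    fix i assume "i < dim_vec (vec n (\<lambda>i. es ! i * g $ i))"
    hence i: "i < n" by simp
    have "(diag_mat_of es *\<^sub>v g) $ i = (\<Sum>j<n. (if i = j then es ! i else 0) * g $ j)"
      using i g unfolding n_def by (simp add: diag_mat_of_def scalar_prod_def atLeast0LessThan)
    also have "\<dots> = (\<Sum>j<n. if i = j then es ! i * g $ j else 0)" by (rule sum.cong) auto
    finally show "(diag_mat_of es *\<^sub>v g) $ i = vec n (\<lambda>i. es ! i * g $ i) $ i" using i by simp
  qed (simp add: n_def diag_mat_of_def)
  thus "(U *\<^sub>v g) \<bullet> (A *\<^sub>v (U *\<^sub>v g)) = (\<Sum>i<length es. es ! i * (g $ i)\<^sup>2)"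
    unfolding change_of_basis[OF A] D using g unfolding n_def
    by (simp add: scalar_prod_def atLeast0LessThan power2_eq_square algebra_simps)
  have "(U *\<^sub>v g) \<bullet> (U *\<^sub>v g) = (U *\<^sub>v g) \<bullet> (1\<^sub>m n *\<^sub>v (U *\<^sub>v g))" using U g by simp
  also have "\<dots> = g \<bullet> g" unfolding change_of_basis[OF one_carrier_mat] using U UU g by simp
  finally show "(U *\<^sub>v g) \<bullet> (U *\<^sub>v g) = (\<Sum>i<length es. (g $ i)\<^sup>2)"
    using g unfolding n_def by (simp add: scalar_prod_def atLeast0LessThan power2_eq_square)
qed

section \<open>Counting eigenvalues\<close>

lemma order_prod_linear_factors: "order x (\<Prod>a\<leftarrow>es. [:- a, 1:]) = count_list es (x::real)"
proof (induction es)
  case (Cons a es)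
  have "order x [:- a, 1:] = (if a = x then 1 else 0)"
    using order_power_n_n[of x 1] by (auto intro: order_0I)
  moreover have "order x ([:- a, 1:] * (\<Prod>a\<leftarrow>es. [:- a, 1:]))
      = order x [:- a, 1:] + order x (\<Prod>a\<leftarrow>es. [:- a, 1:])"
    by (rule order_mult, rule no_zero_divisors) (auto simp: prod_list_zero_iff)
  ultimately show ?case using Cons by simp
qed simp

lemma sum_count_list_filter:
  "(\<Sum>x\<in>{x \<in> set xs. P x}. count_list xs x) = length (filter P xs)"
proof -
  have "length (filter P xs) = sum_list (map (\<lambda>x. of_bool (P x)) xs)" by (induction xs) auto
  also have "\<dots> = (\<Sum>x\<in>set xs. count_list xs x * of_bool (P x))"
    by (rule sum_list_map_eq_sum_count)
  also have "\<dots> = (\<Sum>x\<in>set xs. if P x then count_list xs x else 0)" by (rule sum.cong) auto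
  also have "\<dots> = (\<Sum>x\<in>{x \<in> set xs. P x}. count_list xs x)"
    by (rule sum.inter_filter[symmetric]) simp
  finally show ?thesis by (rule sym)
qed

lemma eig_count_linear_factors:
  assumes "char_poly A = (\<Prod>a\<leftarrow>es. [:- a, 1:])"
  shows "eig_count A P = length (filter P es)"
proof -
  have roots: "{x. poly (\<Prod>a\<leftarrow>es. [:- a, 1:]) x = 0 \<and> P x} = {x \<in> set es. P x}"
    by (auto simp: poly_prod_list prod_list_zero_iff)
  show ?thesis
    unfolding eig_count_def assms roots order_prod_linear_factors by (rule sum_count_list_filter)
qed

lemma max_eig_linear_factors:
  assumes "char_poly A = (\<Prod>a\<leftarrow>es. [:- a, 1:])"
  shows "max_eig A = Max (set es)"
  unfolding max_eig_def assms
  by (auto simp: poly_prod_list prod_list_zero_iff intro: arg_cong[where f = Max])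

lemma underdetermined_kernel:
  fixes M :: "'a :: idom mat"
  assumes M: "M \<in> carrier_mat r c" and rc: "r < c"
  shows "\<exists>x. x \<in> carrier_vec c \<and> x \<noteq> 0\<^sub>v c \<and> M *\<^sub>v x = 0\<^sub>v r"
proof -
  \<comment> \<open>pad \<open>M\<close> with zero rows to a singular square matrix\<close>
  define rows where "rows = (\<lambda>i. if i < r then row M i else 0\<^sub>v c)"
  define M' where "M' = mat\<^sub>r c c rows"
  have M': "M' \<in> carrier_mat c c" unfolding M'_def by simp
  have "M' = mat\<^sub>r c c (\<lambda>i. if i = c - 1 then 0\<^sub>v c else rows i)"
    unfolding M'_def using rc by (intro eq_matI) (auto simp: rows_def)
  hence "det M' = 0"
    using rc M by (simp, intro det_row_0) (auto simp: rows_def)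
  then obtain x where x: "x \<in> carrier_vec c" and x0: "x \<noteq> 0\<^sub>v c" and M'x: "M' *\<^sub>v x = 0\<^sub>v c"
    using det_0_iff_vec_prod_zero[OF M'] by blast
  have "M *\<^sub>v x = 0\<^sub>v r"
  proof (rule eq_vecI)
    fix i assume "i < dim_vec (0\<^sub>v r :: 'a vec)"
    hence i: "i < r" by simp
    have "(M *\<^sub>v x) $ i = (M' *\<^sub>v x) $ i" unfolding M'_def using M i rc by (simp add: rows_def)
    thus "(M *\<^sub>v x) $ i = 0\<^sub>v r $ i" unfolding M'x using i rc by simp
  qed (use M in auto)
  thus ?thesis using x x0 by blast
qed

lemma exists_supported_vec_vanishing_on:
  fixes U :: "'a :: idom mat"
  assumes U: "U \<in> carrier_mat N N" and T: "T \<subseteq> {..<N}" and J: "J \<subseteq> {..<N}"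
    and card: "card T < card J"
  shows "\<exists>g \<in> carrier_vec N. g \<noteq> 0\<^sub>v N \<and> (\<forall>i<N. i \<notin> J \<longrightarrow> g $ i = 0)
    \<and> (\<forall>t\<in>T. (U *\<^sub>v g) $ t = 0)"
proof -
  define k where "k = card T"
  define m where "m = card J"
  obtain \<sigma> where \<sigma>: "bij_betw \<sigma> {0..<k} T"
    using ex_bij_betw_nat_finite[OF finite_subset[OF T]] unfolding k_def by blast
  obtain \<tau> where \<tau>: "bij_betw \<tau> {0..<m} J"
    using ex_bij_betw_nat_finite[OF finite_subset[OF J]] unfolding m_def by blast
  define M where "M = mat k m (\<lambda>(a,b). U $$ (\<sigma> a, \<tau> b))"
  obtain x where x: "x \<in> carrier_vec m" and x0: "x \<noteq> 0\<^sub>v m" and Mx: "M *\<^sub>v x = 0\<^sub>v k"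
    using underdetermined_kernel[of M k m] card unfolding M_def k_def m_def by auto
  define \<tau>' where "\<tau>' = inv_into {0..<m} \<tau>"
  have \<tau>'\<tau>: "\<tau>' (\<tau> b) = b" if "b < m" for b
    unfolding \<tau>'_def using \<tau> that by (simp add: bij_betw_def inv_into_f_f)
  define g where "g = vec N (\<lambda>i. if i \<in> J then x $ (\<tau>' i) else (0::'a))"
  obtain b0 where b0: "b0 < m" and xb0: "x $ b0 \<noteq> 0"
    using x x0 by (metis carrier_vecD eq_vecI index_zero_vec)
  have "\<tau> b0 \<in> J" using \<tau> b0 by (auto simp: bij_betw_def)
  hence "g $ \<tau> b0 \<noteq> 0" using J \<tau>'\<tau>[OF b0] xb0 unfolding g_def by auto
  hence "g \<noteq> 0\<^sub>v N" using \<open>\<tau> b0 \<in> J\<close> J by auto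
  moreover have "(U *\<^sub>v g) $ t = 0" if t: "t \<in> T" for t
  proof -
    obtain a where a: "a < k" and \<sigma>a: "\<sigma> a = t"
      using \<sigma> t by (metis atLeastLessThan_iff bij_betw_iff_bijections)
    have "(U *\<^sub>v g) $ t = (\<Sum>i<N. U $$ (t, i) * g $ i)"
      using U T t unfolding g_def by (auto simp: scalar_prod_def atLeast0LessThan)
    also have "\<dots> = (\<Sum>i\<in>J. U $$ (t, i) * x $ (\<tau>' i))"
      unfolding g_def using J by (intro sum.mono_neutral_cong_right) auto
    also have "\<dots> = (\<Sum>b\<in>{0..<m}. U $$ (t, \<tau> b) * x $ b)"
      using sum.reindex_bij_betw[OF \<tau>, of "\<lambda>i. U $$ (t, i) * x $ (\<tau>' i)"] \<tau>'\<tau> by simp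
    also have "\<dots> = (M *\<^sub>v x) $ a" using a x \<sigma>a unfolding M_def by (simp add: scalar_prod_def)
    finally show ?thesis unfolding Mx using a by simp
  qed
  ultimately show ?thesis unfolding g_def by auto
qed

lemma card_eigenvalues_below_le:
  assumes diag: "orthogonal_diagonalization A U es" and T: "T \<subseteq> {..<length es}"
    and bound: "\<And>f. f \<in> carrier_vec (length es) \<Longrightarrow> (\<forall>t\<in>T. f $ t = 0)
      \<Longrightarrow> f \<bullet> f \<le> \<kappa> * (f \<bullet> (A *\<^sub>v f))"
  shows "card {i. i < length es \<and> \<kappa> * es ! i < 1} \<le> card T"
proof (rule ccontr)
  define N where "N = length es"
  define J where "J = {i. i < N \<and> \<kappa> * es ! i < 1}"
  assume "\<not> card {i. i < length es \<and> \<kappa> * es ! i < 1} \<le> card T"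
  hence "card T < card J" unfolding J_def N_def by simp
  moreover have U: "U \<in> carrier_mat N N" using diag unfolding orthogonal_diagonalization_def N_def by simp
  ultimately obtain g where g: "g \<in> carrier_vec N" and g0: "g \<noteq> 0\<^sub>v N"
    and g_supp: "\<And>i. i < N \<Longrightarrow> i \<notin> J \<Longrightarrow> g $ i = 0" and Ug: "\<forall>t\<in>T. (U *\<^sub>v g) $ t = 0"
    using exists_supported_vec_vanishing_on[of U N T J] T unfolding J_def N_def by auto
  obtain i0 where i0: "i0 < N" and gi0: "g $ i0 \<noteq> 0"
    using g g0 by (metis carrier_vecD eq_vecI index_zero_vec)
  have "(\<Sum>i<N. (g $ i)\<^sup>2) \<le> \<kappa> * (\<Sum>i<N. es ! i * (g $ i)\<^sup>2)"
    using bound[of "U *\<^sub>v g"] Ug U g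
      orthogonal_diagonalization_quadratic_form[OF diag, of g] unfolding N_def by auto
  moreover have "(\<Sum>i<N. (1 - \<kappa> * es ! i) * (g $ i)\<^sup>2) > 0"
  proof (rule sum_pos2[of _ i0])
    show "0 < (1 - \<kappa> * es ! i0) * (g $ i0)\<^sup>2"
      using gi0 g_supp[OF i0] i0 by (intro mult_pos_pos) (auto simp: J_def)
    show "0 \<le> (1 - \<kappa> * es ! i) * (g $ i)\<^sup>2" if "i \<in> {..<N}" for i
      using g_supp[of i] that by (cases "i \<in> J") (auto simp: J_def)
  qed (use i0 in auto)
  ultimately show False
    by (simp add: algebra_simps sum_subtractf sum_distrib_left)
qed

section \<open>The Laplacian quadratic form\<close>

definition dirichlet_energy :: "nat \<Rightarrow> (nat \<Rightarrow> nat \<Rightarrow> real) \<Rightarrow> (nat \<Rightarrow> real) \<Rightarrow> real" where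
  "dirichlet_energy N w f = (\<Sum>u<N. \<Sum>v<N. w u v * (f v - f u)\<^sup>2)"

lemma laplacian_carrier: "laplacian N w \<in> carrier_mat N N"
  unfolding laplacian_def by simp

lemma laplacian_symmetric:
  assumes "weighted_graph N w"
  shows "transpose_mat (laplacian N w) = laplacian N w"
  using assms unfolding laplacian_def weighted_graph_def by (intro eq_matI) auto

lemma laplacian_mult_vec:
  assumes "weighted_graph N w" and x: "x \<in> carrier_vec N" and i: "i < N"
  shows "(laplacian N w *\<^sub>v x) $ i = (\<Sum>j<N. w i j * (x $ i - x $ j))"
proof -
  have "w i i = 0" using assms unfolding weighted_graph_def by simp
  hence off_diag: "(\<Sum>j<N. if i = j then 0 else w i j * x $ j) = (\<Sum>j<N. w i j * x $ j)"
    by (intro sum.cong) auto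
  have "(laplacian N w *\<^sub>v x) $ i = (\<Sum>j<N. (if i = j then (\<Sum>u<N. w i u) else - w i j) * x $ j)"
    using i x by (simp add: laplacian_def scalar_prod_def atLeast0LessThan)
  also have "\<dots> = (\<Sum>j<N. (if i = j then (\<Sum>u<N. w i u) * x $ i else 0)
      - (if i = j then 0 else w i j * x $ j))"
    by (rule sum.cong) auto
  also have "\<dots> = (\<Sum>u<N. w i u) * x $ i - (\<Sum>j<N. w i j * x $ j)"
    using i by (simp add: sum_subtractf off_diag)
  also have "\<dots> = (\<Sum>j<N. w i j * (x $ i - x $ j))"
    by (simp add: sum_distrib_left sum_subtractf algebra_simps)
  finally show ?thesis .
qed

lemma laplacian_quadratic_form:
  assumes wg: "weighted_graph N w" and x: "x \<in> carrier_vec N"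
  shows "2 * (x \<bullet> (laplacian N w *\<^sub>v x)) = dirichlet_energy N w (\<lambda>i. x $ i)"
proof -
  have sym: "w u v = w v u" if "u < N" "v < N" for u v
    using wg that unfolding weighted_graph_def by auto
  define F where "F u v = w u v * (x $ u * x $ u - x $ u * x $ v)" for u v
  have "x \<bullet> (laplacian N w *\<^sub>v x) = (\<Sum>u<N. \<Sum>v<N. F u v)"
    using x laplacian_mult_vec[OF wg x] laplacian_carrier[of N w] unfolding F_def
    by (simp add: scalar_prod_def atLeast0LessThan sum_distrib_left algebra_simps)
  moreover have "(\<Sum>u<N. \<Sum>v<N. F u v) = (\<Sum>u<N. \<Sum>v<N. F v u)"
    by (rule sum.swap)
  ultimately have "2 * (x \<bullet> (laplacian N w *\<^sub>v x)) = (\<Sum>u<N. \<Sum>v<N. F u v + F v u)"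
    by (simp add: sum.distrib)
  also have "\<dots> = dirichlet_energy N w (\<lambda>i. x $ i)"
    unfolding dirichlet_energy_def F_def
    by (intro sum.cong refl) (simp add: sym power2_eq_square algebra_simps)
  finally show ?thesis .
qed

section \<open>A Hardy inequality along the layers of a partition\<close>

definition layer_energy ::
    "(nat \<Rightarrow> nat \<Rightarrow> real) \<Rightarrow> (nat \<Rightarrow> real) \<Rightarrow> nat set \<Rightarrow> nat set \<Rightarrow> real" where
  "layer_energy w f A B = (\<Sum>u\<in>A. \<Sum>v\<in>B. w u v * (f v - f u)\<^sup>2)"

fun layer_weight :: "(nat \<Rightarrow> nat \<Rightarrow> real) \<Rightarrow> (nat \<Rightarrow> nat set) \<Rightarrow> nat \<Rightarrow> real" where
  "layer_weight w S 0 = 0"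
| "layer_weight w S (Suc m) = 1 / K_S w S m + D_S w S m / K_S w S m * layer_weight w S m"

lemma layer_weight_closed_form:
  "layer_weight w S m = (\<Sum>k=1..m. (1 / K_S w S (k - 1)) * (\<Prod>i=k..<m. D_S w S i / K_S w S i))"
proof (induction m)
  case (Suc m)
  have split_last: "sum g {1..Suc m} = sum g {1..m} + g (Suc m)" for g :: "nat \<Rightarrow> real"
    by (simp add: sum.cl_ivl_Suc)
  have "(\<Sum>k=1..Suc m. (1 / K_S w S (k - 1)) * (\<Prod>i=k..<Suc m. D_S w S i / K_S w S i))
    = (\<Sum>k=1..m. (1 / K_S w S (k - 1)) * (\<Prod>i=k..<Suc m. D_S w S i / K_S w S i)) + 1 / K_S w S m"
    by (subst split_last) simp
  also have "(\<Sum>k=1..m. (1 / K_S w S (k - 1)) * (\<Prod>i=k..<Suc m. D_S w S i / K_S w S i))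
    = (\<Sum>k=1..m. (1 / K_S w S (k - 1)) * (\<Prod>i=k..<m. D_S w S i / K_S w S i))
        * (D_S w S m / K_S w S m)"
    unfolding sum_distrib_right by (rule sum.cong[OF refl], subst prod.atLeastLessThan_Suc) (auto simp: mult_ac)
  finally show ?case by (metis Suc.IH layer_weight.simps(2) add.commute mult.commute)
qed simp

lemma weighted_square_split: "(\<beta>::real) * y\<^sup>2 \<le> (1 + \<beta>) * (\<beta> * (y - g)\<^sup>2 + g\<^sup>2)"
proof -
  have "(1 + \<beta>) * (\<beta> * (y - g)\<^sup>2 + g\<^sup>2) - \<beta> * y\<^sup>2 = (\<beta> * (y - g) - g)\<^sup>2"
    by (simp add: power2_eq_square algebra_simps)
  thus ?thesis by (smt (verit) zero_le_power2)
qed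

lemma layer_mass_step:
  fixes A B :: "nat set" and K D \<beta> :: real
  assumes fin: "finite A" "finite B"
    and w: "\<And>u v. u \<in> A \<Longrightarrow> v \<in> B \<Longrightarrow> 0 \<le> w u v \<and> w v u = w u v"
    and K: "\<And>v. v \<in> B \<Longrightarrow> K \<le> wA w A v"
    and D: "\<And>u. u \<in> A \<Longrightarrow> wA w B u \<le> D"
    and \<beta>: "\<beta> \<ge> 0"
  shows "\<beta> * K * (\<Sum>v\<in>B. (f v)\<^sup>2)
    \<le> (1 + \<beta>) * (\<beta> * layer_energy w f A B + D * (\<Sum>u\<in>A. (f u)\<^sup>2))"
proof -
  have "\<beta> * K * (\<Sum>v\<in>B. (f v)\<^sup>2) \<le> (\<Sum>v\<in>B. \<beta> * (wA w A v * (f v)\<^sup>2))"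
    unfolding sum_distrib_left using K \<beta>
    by (intro sum_mono) (simp add: mult.assoc mult_left_mono mult_right_mono)
  also have "\<dots> = (\<Sum>u\<in>A. \<Sum>v\<in>B. w u v * (\<beta> * (f v)\<^sup>2))"
    unfolding wA_def by (subst sum.swap) (simp add: sum_distrib_left sum_distrib_right algebra_simps)
  also have "\<dots> \<le> (\<Sum>u\<in>A. \<Sum>v\<in>B. w u v * ((1 + \<beta>) * (\<beta> * (f v - f u)\<^sup>2 + (f u)\<^sup>2)))"
    using w by (intro sum_mono mult_left_mono weighted_square_split) auto
  also have "\<dots> = (1 + \<beta>) * (\<beta> * layer_energy w f A B + (\<Sum>u\<in>A. wA w B u * (f u)\<^sup>2))"
    unfolding layer_energy_def wA_def using w
    by (simp add: sum_distrib_left sum_distrib_right sum.distrib algebra_simps cong: sum.cong)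
  also have "\<dots> \<le> (1 + \<beta>) * (\<beta> * layer_energy w f A B + D * (\<Sum>u\<in>A. (f u)\<^sup>2))"
    unfolding sum_distrib_left using D \<beta>
    by (intro mult_left_mono add_left_mono sum_mono mult_right_mono) auto
  finally show ?thesis .
qed

text \<open>Choosing \<open>\<beta> = D s\<close> (or letting \<open>\<beta> \<rightarrow> 0\<close> when \<open>D s = 0\<close>) in the layer step
  yields the recursion defining \<open>layer_weight\<close>.\<close>

lemma layer_mass_recursion:
  fixes K D s a a' Q E :: real
  assumes K: "K > 0" and D: "D \<ge> 0" and s: "s \<ge> 0" and Q: "Q \<ge> 0" and E: "E \<ge> 0"
    and a: "a \<le> s * Q"
    and step: "\<And>\<beta>. \<beta> \<ge> 0 \<Longrightarrow> \<beta> * K * a' \<le> (1 + \<beta>) * (\<beta> * E + D * a)"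
  shows "a' \<le> (1 / K + D / K * s) * (Q + E)"
proof -
  have Da: "D * a \<le> D * s * Q" using mult_left_mono[OF a D] by (simp add: mult.assoc)
  have "K * a' \<le> (1 + D * s) * (E + Q)"
  proof (cases "D * s > 0")
    case True
    have "D * s * (K * a') \<le> (1 + D * s) * (D * s * E + D * a)"
      using step[of "D * s"] True by (simp add: mult.assoc)
    also have "\<dots> \<le> (1 + D * s) * (D * s * E + D * s * Q)"
      using Da True by (intro mult_left_mono) auto
    also have "\<dots> = D * s * ((1 + D * s) * (E + Q))" by (simp add: algebra_simps)
    finally show ?thesis using True by (simp only: mult_le_cancel_left_pos)
  next
    case False
    hence "D * s = 0" using mult_nonneg_nonneg[OF D s] by linarith
    hence "D * a \<le> 0" using Da by (cases "D = 0") auto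
    have "K * a' \<le> E"
    proof (rule field_le_epsilon)
      fix \<epsilon> :: real assume "\<epsilon> > 0"
      define \<beta> where "\<beta> = \<epsilon> / (E + 1)"
      have \<beta>: "\<beta> > 0" unfolding \<beta>_def using \<open>\<epsilon> > 0\<close> E by simp
      have "\<beta> * E = \<epsilon> * (E / (E + 1))" unfolding \<beta>_def by simp
      also have "\<dots> \<le> \<epsilon>" using \<open>\<epsilon> > 0\<close> E by (intro mult_left_le) auto
      finally have \<beta>E: "\<beta> * E \<le> \<epsilon>" .
      have "\<beta> * (K * a') \<le> (1 + \<beta>) * (\<beta> * E + D * a)" using step[of \<beta>] \<beta> by (simp add: mult.assoc)
      also have "\<dots> \<le> (1 + \<beta>) * (\<beta> * E)" using \<open>D * a \<le> 0\<close> \<beta> by (intro mult_left_mono) auto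
      also have "\<dots> = \<beta> * ((1 + \<beta>) * E)" by (simp add: algebra_simps)
      finally have "K * a' \<le> (1 + \<beta>) * E" using \<beta> by (simp only: mult_le_cancel_left_pos)
      thus "K * a' \<le> E + \<epsilon>" using \<beta>E by (simp add: algebra_simps)
    qed
    thus ?thesis unfolding \<open>D * s = 0\<close> using Q by simp
  qed
  thus ?thesis using K by (simp add: field_simps)
qed

context
  fixes N n :: nat and w :: "nat \<Rightarrow> nat \<Rightarrow> real" and S :: "nat \<Rightarrow> nat set"
  assumes wg: "weighted_graph N w"
    and part: "is_partition N S n"
    and K_pos: "\<forall>m<n. K_S w S m > 0"
begin

lemma layer_subset: "m \<le> n \<Longrightarrow> S m \<subseteq> {..<N}"
  using part unfolding is_partition_def by blast

lemma layer_finite: "m \<le> n \<Longrightarrow> finite (S m)"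
  using layer_subset finite_subset by blast

lemma weight_nonneg: "u < N \<Longrightarrow> v < N \<Longrightarrow> 0 \<le> w u v"
  using wg unfolding weighted_graph_def by auto

lemma K_S_le: "m < n \<Longrightarrow> v \<in> S (Suc m) \<Longrightarrow> K_S w S m \<le> wA w (S m) v"
  unfolding K_S_def using layer_finite[of "Suc m"] by (intro cInf_le_finite) auto

lemma D_S_ge: "m < n \<Longrightarrow> u \<in> S m \<Longrightarrow> wA w (S (Suc m)) u \<le> D_S w S m"
  unfolding D_S_def using layer_finite[of m] by (intro le_cSup_finite) auto

lemma D_S_nonneg:
  assumes "m < n"
  shows "0 \<le> D_S w S m"
proof -
  obtain u where u: "u \<in> S m" using part assms unfolding is_partition_def by fastforce
  have "0 \<le> wA w (S (Suc m)) u"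
    unfolding wA_def using u layer_subset[of m] layer_subset[of "Suc m"] assms
    by (intro sum_nonneg weight_nonneg) auto
  thus ?thesis using D_S_ge[OF assms u] by linarith
qed

lemma layer_weight_nonneg: "m \<le> n \<Longrightarrow> 0 \<le> layer_weight w S m"
proof (induction m)
  case (Suc m)
  hence "0 < K_S w S m" "0 \<le> D_S w S m" "0 \<le> layer_weight w S m"
    using K_pos D_S_nonneg by auto
  thus ?case by (auto intro!: add_nonneg_nonneg divide_nonneg_pos mult_nonneg_nonneg)
qed simp

lemma layer_energy_nonneg: "m < n \<Longrightarrow> 0 \<le> layer_energy w f (S m) (S (Suc m))"
  unfolding layer_energy_def using layer_subset[of m] layer_subset[of "Suc m"]
  by (intro sum_nonneg mult_nonneg_nonneg weight_nonneg) auto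

lemma layer_mass_bound:
  assumes f0: "\<forall>v\<in>S 0. f v = 0"
  shows "m \<le> n \<Longrightarrow>
    (\<Sum>v\<in>S m. (f v)\<^sup>2) \<le> layer_weight w S m * (\<Sum>j<m. layer_energy w f (S j) (S (Suc j)))"
proof (induction m)
  case 0
  thus ?case using f0 by simp
next
  case (Suc m)
  hence m: "m < n" by simp
  have step: "\<beta> * K_S w S m * (\<Sum>v\<in>S (Suc m). (f v)\<^sup>2)
      \<le> (1 + \<beta>) * (\<beta> * layer_energy w f (S m) (S (Suc m)) + D_S w S m * (\<Sum>u\<in>S m. (f u)\<^sup>2))"
    if "\<beta> \<ge> 0" for \<beta>
  proof (rule layer_mass_step)
    show "0 \<le> w u v \<and> w v u = w u v" if "u \<in> S m" "v \<in> S (Suc m)" for u v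
      using that wg layer_subset[of m] layer_subset[of "Suc m"] m
      unfolding weighted_graph_def by auto
  qed (use that m layer_finite K_S_le D_S_ge in auto)
  have "(\<Sum>v\<in>S (Suc m). (f v)\<^sup>2) \<le> (1 / K_S w S m + D_S w S m / K_S w S m * layer_weight w S m)
      * ((\<Sum>j<m. layer_energy w f (S j) (S (Suc j))) + layer_energy w f (S m) (S (Suc m)))"
    using K_pos m D_S_nonneg[OF m] layer_weight_nonneg[of m] layer_energy_nonneg[of m]
      layer_energy_nonneg Suc.IH step
    by (intro layer_mass_recursion[where a = "\<Sum>u\<in>S m. (f u)\<^sup>2"]) (auto intro: sum_nonneg)
  thus ?case by simp
qed

lemma sum_layer_energy_le: "(\<Sum>j<n. layer_energy w f (S j) (S (Suc j))) \<le> dirichlet_energy N w f"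
proof -
  define G where "G u = (\<Sum>v<N. w u v * (f v - f u)\<^sup>2)" for u
  have in_range: "u < N" if "j < n" "u \<in> S j" for j u using layer_subset[of j] that by auto
  have "(\<Sum>j<n. layer_energy w f (S j) (S (Suc j))) \<le> (\<Sum>j<n. \<Sum>u\<in>S j. G u)"
    unfolding layer_energy_def G_def using layer_subset in_range
    by (intro sum_mono sum_mono2) (auto intro!: mult_nonneg_nonneg weight_nonneg)
  also have "\<dots> = (\<Sum>u\<in>(\<Union>j<n. S j). G u)"
    using layer_finite part unfolding is_partition_def by (intro sum.UNION_disjoint[symmetric]) auto
  also have "\<dots> \<le> (\<Sum>u<N. G u)"
    using in_range unfolding G_def
    by (intro sum_mono2) (auto intro!: sum_nonneg mult_nonneg_nonneg weight_nonneg)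
  finally show ?thesis unfolding G_def dirichlet_energy_def .
qed

lemma sum_squares_by_layers: "(\<Sum>v<N. (f v)\<^sup>2) = (\<Sum>m\<le>n. \<Sum>v\<in>S m. (f v)\<^sup>2)"
proof -
  have "(\<Sum>v<N. (f v)\<^sup>2) = (\<Sum>v\<in>(\<Union>m\<le>n. S m). (f v)\<^sup>2)"
    using part unfolding is_partition_def by simp
  also have "\<dots> = (\<Sum>m\<le>n. \<Sum>v\<in>S m. (f v)\<^sup>2)"
    using layer_finite part unfolding is_partition_def by (intro sum.UNION_disjoint) auto
  finally show ?thesis .
qed

lemma delta2_squared: "(delta2 w S n)\<^sup>2 = (\<Sum>m=1..n. layer_weight w S m)"
proof -
  have "0 \<le> (\<Sum>m=1..n. layer_weight w S m)" by (intro sum_nonneg layer_weight_nonneg) auto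
  thus ?thesis unfolding delta2_def layer_weight_closed_form[symmetric] by simp
qed

lemma hardy_inequality:
  assumes "\<forall>v\<in>S 0. f v = 0"
  shows "(\<Sum>v<N. (f v)\<^sup>2) \<le> (delta2 w S n)\<^sup>2 * dirichlet_energy N w f"
proof -
  have "(\<Sum>v<N. (f v)\<^sup>2) \<le> (\<Sum>m\<le>n. layer_weight w S m * dirichlet_energy N w f)"
    unfolding sum_squares_by_layers
  proof (rule sum_mono)
    fix m assume "m \<in> {..n}"
    hence m: "m \<le> n" by simp
    have "(\<Sum>j<m. layer_energy w f (S j) (S (Suc j))) \<le> (\<Sum>j<n. layer_energy w f (S j) (S (Suc j)))"
      using m layer_energy_nonneg by (intro sum_mono2) auto
    also have "\<dots> \<le> dirichlet_energy N w f" by (rule sum_layer_energy_le)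
    finally show "(\<Sum>v\<in>S m. (f v)\<^sup>2) \<le> layer_weight w S m * dirichlet_energy N w f"
      using layer_mass_bound[OF assms m] layer_weight_nonneg[OF m]
      by (meson mult_left_mono order_trans)
  qed
  also have "\<dots> = (\<Sum>m=1..n. layer_weight w S m) * dirichlet_energy N w f"
    by (simp add: sum_distrib_right atMost_atLeast0 sum.atLeast_Suc_atMost)
  finally show ?thesis unfolding delta2_squared .
qed

lemma laplacian_hardy_inequality:
  assumes x: "x \<in> carrier_vec N" and x0: "\<forall>v\<in>S 0. x $ v = 0"
  shows "x \<bullet> x \<le> 2 * (delta2 w S n)\<^sup>2 * (x \<bullet> (laplacian N w *\<^sub>v x))"
proof -
  have "x \<bullet> x = (\<Sum>v<N. (x $ v)\<^sup>2)"
    using x by (simp add: scalar_prod_def atLeast0LessThan power2_eq_square)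
  also have "\<dots> \<le> (delta2 w S n)\<^sup>2 * dirichlet_energy N w (\<lambda>v. x $ v)"
    using hardy_inequality x0 by simp
  finally show ?thesis unfolding laplacian_quadratic_form[OF wg x, symmetric] by simp
qed

end

lemma less_threshold_iff: "ereal x < threshold w S n \<longleftrightarrow> 2 * (delta2 w S n)\<^sup>2 * x < 1"
  unfolding threshold_def by (auto simp: field_simps)

theorem theorem3p3:
  fixes N n :: nat and w :: "nat \<Rightarrow> nat \<Rightarrow> real" and S :: "nat \<Rightarrow> nat set"
  assumes "N \<ge> 1"
    and "weighted_graph N w"
    and "connected_wg N w"
    and "is_partition N S n"
    and "\<forall>m<n. K_S w S m > 0"
  shows "eig_count (laplacian N w) (\<lambda>x. 0 \<le> x \<and> ereal x < threshold w S n) \<le> card (S 0) \<and>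
         eig_count (laplacian N w)
           (\<lambda>x. threshold w S n \<le> ereal x \<and> x \<le> max_eig (laplacian N w)) \<ge> N - card (S 0)"
proof -
  note wg = assms(2) and part = assms(4) and K_pos = assms(5)
  obtain U es where N: "length es = N" and diag: "orthogonal_diagonalization (laplacian N w) U es"
    using real_symmetric_orthogonal_diagonalization[OF laplacian_carrier laplacian_symmetric[OF wg]]
    by blast
  note cp = orthogonal_diagonalization_char_poly[OF diag]
  let ?below = "\<lambda>x. ereal x < threshold w S n"
  have "card {i. i < N \<and> 2 * (delta2 w S n)\<^sup>2 * es ! i < 1} \<le> card (S 0)"
    using card_eigenvalues_below_le[OF diag] laplacian_hardy_inequality[OF wg part K_pos]
      layer_subset[OF wg part K_pos, of 0] N by auto
  hence below: "length (filter ?below es) \<le> card (S 0)"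
    unfolding length_filter_conv_card less_threshold_iff N .
  have "length (filter (\<lambda>x. 0 \<le> x \<and> ?below x) es) \<le> length (filter ?below es)"
    by (induction es) auto
  moreover have "filter (\<lambda>x. threshold w S n \<le> ereal x \<and> x \<le> Max (set es)) es
      = filter (\<lambda>x. \<not> ?below x) es"
    by (rule filter_cong) auto
  moreover have "length (filter (\<lambda>x. \<not> ?below x) es) = N - length (filter ?below es)"
    using sum_length_filter_compl[of ?below es] N by simp
  ultimately show ?thesis
    using below unfolding eig_count_linear_factors[OF cp] max_eig_linear_factors[OF cp] by simp
qed

end
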